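(* Let $V_0\le V$ be finite-dimensional vector spaces, $E=(E,q)$ a formed space and $U\in\mathcal{P}^\omega(E)$. The actions of $\operatorname{GL}(V)$ on $\mathcal{P}(V)$, of $A^T(V,V_0)$ on $\mathcal{P}(V,V_0)$, of $G(E)$ on $\mathcal{P}^\omega(E)$, and of $A(E,U)$ on $\mathcal{P}^\omega(E,U)$ are all transitive on the elements of any given dimension.
   Context: $\mathcal{P}(V)$ is the poset of subspaces $0<W<V$; $\mathcal{P}(V,V_0)$ the poset of $W<V$ with $W+V_0=V$; $A^T(V,V_0)=\{g\in\operatorname{GL}(V): g(v)-v\in V_0\ \forall v\}$. Formed spaces over a field with involution $\sigma$ ($\bar c=\sigma(c)$), $\varepsilon$ ($\varepsilon\bar\varepsilon=1$), $\Lambda$ ($\{c-\varepsilon\bar c\}\le\Lambda\le\{c:c+\varepsilon\bar c=0\}$): forms are sesquilinear maps modulo those $f$ with $f(v,v)\in\Lambda$, $f(w,v)=-\varepsilon\overline{f(v,w)}$; $\omega_q(v,w)=q(v,w)+\varepsilon\overline{q(w,v)}$, $Q_q(v)=q(v,v)+\Lambda$; radical $R(E)=\{v:\omega_q(E,v)=0,Q_q(v)=0\}$; $U^\perp=\{v:\omega_q(v,U)=0\}$; isotropic means $\omega_q,Q_q$ vanish. $\mathcal{P}^\omega(E)$: isotropic $W$ with $R(E)<W<E$; $\mathcal{P}^\omega(E,U)$: those with also $W+U^\perp=E$. $G(E)$ is the group of bijective isometries, $A(E,U)$ its subgroup fixing $U$ pointwise. *)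

theory Defs
  imports "HOL.Vector_Spaces"
begin

section \<open>Linear-algebra notions (V is the whole carrier type of a vector space)\<close>

definition fin_dim :: "('k::field \<Rightarrow> 'v::ab_group_add \<Rightarrow> 'v) \<Rightarrow> bool" where
  "fin_dim s \<longleftrightarrow> (\<exists>B. finite B \<and> module.span s B = UNIV)"

definition sum_space :: "'v::ab_group_add set \<Rightarrow> 'v set \<Rightarrow> 'v set" where
  "sum_space W W' = {w + w' | w w'. w \<in> W \<and> w' \<in> W'}"

definition GLgrp :: "('k::field \<Rightarrow> 'v::ab_group_add \<Rightarrow> 'v) \<Rightarrow> ('v \<Rightarrow> 'v) set" where
  "GLgrp s = {g. Vector_Spaces.linear s s g \<and> bij g}"

definition PV :: "('k::field \<Rightarrow> 'v::ab_group_add \<Rightarrow> 'v) \<Rightarrow> 'v set set" where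
  "PV s = {W. module.subspace s W \<and> {0} \<subset> W \<and> W \<subset> UNIV}"

definition PVrel :: "('k::field \<Rightarrow> 'v::ab_group_add \<Rightarrow> 'v) \<Rightarrow> 'v set \<Rightarrow> 'v set set" where
  "PVrel s V0 = {W. module.subspace s W \<and> W \<subset> UNIV \<and> sum_space W V0 = UNIV}"

definition AT :: "('k::field \<Rightarrow> 'v::ab_group_add \<Rightarrow> 'v) \<Rightarrow> 'v set \<Rightarrow> ('v \<Rightarrow> 'v) set" where
  "AT s V0 = {g \<in> GLgrp s. \<forall>v. g v - v \<in> V0}"

definition field_involution :: "('k::field \<Rightarrow> 'k) \<Rightarrow> bool" where
  "field_involution \<sigma> \<longleftrightarrow> (\<forall>a b. \<sigma> (a + b) = \<sigma> a + \<sigma> b) \<and> (\<forall>a b. \<sigma> (a * b) = \<sigma> a * \<sigma> b)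
     \<and> (\<forall>a. \<sigma> (\<sigma> a) = a)"

definition form_param :: "('k::field \<Rightarrow> 'k) \<Rightarrow> 'k \<Rightarrow> 'k set \<Rightarrow> bool" where
  "form_param \<sigma> \<epsilon> \<Lambda> \<longleftrightarrow> field_involution \<sigma> \<and> \<epsilon> * \<sigma> \<epsilon> = 1
     \<and> 0 \<in> \<Lambda> \<and> (\<forall>a\<in>\<Lambda>. \<forall>b\<in>\<Lambda>. a + b \<in> \<Lambda>) \<and> (\<forall>a\<in>\<Lambda>. - a \<in> \<Lambda>)
     \<and> {c - \<epsilon> * \<sigma> c | c. True} \<subseteq> \<Lambda> \<and> \<Lambda> \<subseteq> {c. c + \<epsilon> * \<sigma> c = 0}"

definition sesquilinear :: "('k::field \<Rightarrow> 'v::ab_group_add \<Rightarrow> 'v) \<Rightarrow> ('k \<Rightarrow> 'k) \<Rightarrow> ('v \<Rightarrow> 'v \<Rightarrow> 'k) \<Rightarrow> bool" where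
  "sesquilinear s \<sigma> q \<longleftrightarrow> (\<forall>u v w. q (u + v) w = q u w + q v w) \<and> (\<forall>u v w. q u (v + w) = q u v + q u w)
     \<and> (\<forall>a v w. q (s a v) w = \<sigma> a * q v w) \<and> (\<forall>a v w. q v (s a w) = q v w * a)"

text \<open>The sesquilinear maps that are identified with zero (forms are taken modulo these).\<close>
definition trivial_form :: "('k::field \<Rightarrow> 'v::ab_group_add \<Rightarrow> 'v) \<Rightarrow> ('k \<Rightarrow> 'k) \<Rightarrow> 'k \<Rightarrow> 'k set \<Rightarrow> ('v \<Rightarrow> 'v \<Rightarrow> 'k) \<Rightarrow> bool" where
  "trivial_form s \<sigma> \<epsilon> \<Lambda> f \<longleftrightarrow> sesquilinear s \<sigma> f \<and> (\<forall>v. f v v \<in> \<Lambda>)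
     \<and> (\<forall>v w. f w v = - (\<epsilon> * \<sigma> (f v w)))"

definition omega :: "('k::field \<Rightarrow> 'k) \<Rightarrow> 'k \<Rightarrow> ('v \<Rightarrow> 'v \<Rightarrow> 'k) \<Rightarrow> 'v \<Rightarrow> 'v \<Rightarrow> 'k" where
  "omega \<sigma> \<epsilon> q v w = q v w + \<epsilon> * \<sigma> (q w v)"

text \<open>Q_q(v) = q(v,v) + Lambda vanishes iff q(v,v) in Lambda.\<close>
definition radical :: "('k::field \<Rightarrow> 'k) \<Rightarrow> 'k \<Rightarrow> 'k set \<Rightarrow> ('v \<Rightarrow> 'v \<Rightarrow> 'k) \<Rightarrow> 'v set" where
  "radical \<sigma> \<epsilon> \<Lambda> q = {v. (\<forall>u. omega \<sigma> \<epsilon> q u v = 0) \<and> q v v \<in> \<Lambda>}"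

definition perp :: "('k::field \<Rightarrow> 'k) \<Rightarrow> 'k \<Rightarrow> ('v \<Rightarrow> 'v \<Rightarrow> 'k) \<Rightarrow> 'v set \<Rightarrow> 'v set" where
  "perp \<sigma> \<epsilon> q U = {v. \<forall>u\<in>U. omega \<sigma> \<epsilon> q v u = 0}"

definition isotropic :: "('k::field \<Rightarrow> 'k) \<Rightarrow> 'k \<Rightarrow> 'k set \<Rightarrow> ('v \<Rightarrow> 'v \<Rightarrow> 'k) \<Rightarrow> 'v set \<Rightarrow> bool" where
  "isotropic \<sigma> \<epsilon> \<Lambda> q W \<longleftrightarrow> (\<forall>v\<in>W. \<forall>w\<in>W. omega \<sigma> \<epsilon> q v w = 0) \<and> (\<forall>v\<in>W. q v v \<in> \<Lambda>)"

definition Pom :: "('k::field \<Rightarrow> 'v::ab_group_add \<Rightarrow> 'v) \<Rightarrow> ('k \<Rightarrow> 'k) \<Rightarrow> 'k \<Rightarrow> 'k set \<Rightarrow> ('v \<Rightarrow> 'v \<Rightarrow> 'k) \<Rightarrow> 'v set set" where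
  "Pom s \<sigma> \<epsilon> \<Lambda> q = {W. module.subspace s W \<and> isotropic \<sigma> \<epsilon> \<Lambda> q W
       \<and> radical \<sigma> \<epsilon> \<Lambda> q \<subset> W \<and> W \<subset> UNIV}"

definition Pom_rel :: "('k::field \<Rightarrow> 'v::ab_group_add \<Rightarrow> 'v) \<Rightarrow> ('k \<Rightarrow> 'k) \<Rightarrow> 'k \<Rightarrow> 'k set \<Rightarrow> ('v \<Rightarrow> 'v \<Rightarrow> 'k) \<Rightarrow> 'v set \<Rightarrow> 'v set set" where
  "Pom_rel s \<sigma> \<epsilon> \<Lambda> q U = {W \<in> Pom s \<sigma> \<epsilon> \<Lambda> q. sum_space W (perp \<sigma> \<epsilon> q U) = UNIV}"

text \<open>G(E): bijective linear maps g with [q(g-,g-)] = [q] as forms.\<close>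
definition isom_grp :: "('k::field \<Rightarrow> 'v::ab_group_add \<Rightarrow> 'v) \<Rightarrow> ('k \<Rightarrow> 'k) \<Rightarrow> 'k \<Rightarrow> 'k set \<Rightarrow> ('v \<Rightarrow> 'v \<Rightarrow> 'k) \<Rightarrow> ('v \<Rightarrow> 'v) set" where
  "isom_grp s \<sigma> \<epsilon> \<Lambda> q = {g. Vector_Spaces.linear s s g \<and> bij g
       \<and> trivial_form s \<sigma> \<epsilon> \<Lambda> (\<lambda>v w. q (g v) (g w) - q v w)}"

definition fix_grp :: "('k::field \<Rightarrow> 'v::ab_group_add \<Rightarrow> 'v) \<Rightarrow> ('k \<Rightarrow> 'k) \<Rightarrow> 'k \<Rightarrow> 'k set \<Rightarrow> ('v \<Rightarrow> 'v \<Rightarrow> 'k) \<Rightarrow> 'v set \<Rightarrow> ('v \<Rightarrow> 'v) set" where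
  "fix_grp s \<sigma> \<epsilon> \<Lambda> q U = {g \<in> isom_grp s \<sigma> \<epsilon> \<Lambda> q. \<forall>u\<in>U. g u = u}"

definition transitive_on_dims :: "('k::field \<Rightarrow> 'v::ab_group_add \<Rightarrow> 'v) \<Rightarrow> ('v \<Rightarrow> 'v) set \<Rightarrow> 'v set set \<Rightarrow> bool" where
  "transitive_on_dims s G X \<longleftrightarrow> (\<forall>W\<in>X. \<forall>W'\<in>X. vector_space.dim s W = vector_space.dim s W'
       \<longrightarrow> (\<exists>g\<in>G. g ` W = W'))"

end

theory Submission
  imports Defs
begin

(* Linear part: extend a basis B0 of W \<inter> V0 to bases C \<union> B0 of W and B0 \<union> D of V0.  Since
   dim (W \<inter> V0) = dim W + dim V0 - dim V, the subspace W' yields bases of the same shape, and the linear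
   map sending B0 to B0', D to D' and each c \<in> C to some w' \<in> W' with w' - c \<in> V0 lies in A^T(V,V0)
   and maps W onto W'.  GL(V) is the case V0 = V.

   Formed part: a form of Witt's extension theorem.  Let U be isotropic and R(E) \<subseteq> J with
   J + U\<^sup>\<perp> = E.  Two isotropic subspaces W, W' \<supseteq> J of equal dimension are related by an isometry
   fixing U pointwise, by induction on dim W' - dim (W \<inter> W'): choose y \<in> (W' - W) \<inter> U\<^sup>\<perp> and a
   hyperplane I of W through W \<inter> W' with y \<perp> I, write W = I + \<langle>x\<rangle>, and move the isotropic line
   x to y by one or two hyperbolic swaps fixing I + U; the hypotheses on J make x and y nondegenerate
   modulo I + U.  For G(E) take U = 0, J = R(E).  For A(E,U), first use Eichler transformations fixing
   U to map a family in W dual to a basis of U modulo R(E) onto such a family in W'; together with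
   R(E) it spans a J with J + U\<^sup>\<perp> = E. *)

section \<open>Linear algebra\<close>

lemma sum_space_UNIVE:
  assumes "sum_space A B = UNIV"
  obtains a b where "v = a + b" "a \<in> A" "b \<in> B"
proof -
  have "v \<in> sum_space A B"
    using assms by simp
  then show ?thesis
    using that by (auto simp: sum_space_def)
qed

context vector_space
begin

lemma subspace_moved_within:
  assumes "Vector_Spaces.linear scale scale g" "subspace V0"
  shows "subspace {v. g v - v \<in> V0}"
proof -
  interpret g: Vector_Spaces.linear scale scale "\<lambda>v. g v - v"
    using assms(1) by (simp add: linear_iff algebra_simps)
  show ?thesis
    using g.subspace_vimage[OF assms(2)] by (simp add: vimage_def)
qed

lemma linear_fixes_span:
  assumes "Vector_Spaces.linear scale scale g" "\<And>b. b \<in> B \<Longrightarrow> g b = b" "v \<in> span B"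
  shows "g v = v"
proof -
  have "span B \<subseteq> {v. g v - v \<in> {0}}"
    using assms(2) subspace_moved_within[OF assms(1) subspace_single_0] by (intro span_minimal) auto
  then show ?thesis
    using assms(3) by auto
qed

lemma span_insert_scale:
  assumes "k \<noteq> 0"
  shows "span (insert (scale k y) I) = span (insert y I)"
proof -
  have "y = scale (inverse k) (scale k y)"
    using assms by simp
  then have "y \<in> span (insert (scale k y) I)"
    by (metis insertI1 span_base span_scale)
  moreover have "scale k y \<in> span (insert y I)"
    by (simp add: span_base span_scale)
  ultimately show ?thesis
    unfolding span_eq by (meson dual_order.trans insert_subset span_superset subset_insertI)
qed

lemma sum_space_subspace_eq_span:
  assumes "subspace W" "subspace V0"
  shows "sum_space W V0 = span (W \<union> V0)"
  unfolding sum_space_def span_Un span_eq_iff[THEN iffD2, OF assms(1)] span_eq_iff[THEN iffD2, OF assms(2)] ..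

lemma surj_if_moves_within:
  assumes "Vector_Spaces.linear scale scale g" "V0 \<subseteq> range g" "\<And>v. g v - v \<in> V0"
  shows "surj g"
proof -
  interpret g: Vector_Spaces.linear scale scale g
    by (rule assms(1))
  have range_g: "subspace (range g)"
    using g.subspace_image[OF subspace_UNIV] .
  have "v \<in> range g" for v
  proof -
    have "g v - (g v - v) \<in> range g"
      using assms(2,3) subspace_diff[OF range_g] by blast
    then show ?thesis
      by simp
  qed
  then show ?thesis
    by blast
qed

lemma span_supplement_part:
  assumes sV0: "subspace V0" and "B0 \<union> D \<subseteq> V0" and "span C \<inter> V0 \<subseteq> span B0"
    and "span (C \<union> B0 \<union> D) = UNIV"
  shows "span (B0 \<union> D) = V0"
proof
  show "span (B0 \<union> D) \<subseteq> V0"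
    using assms(2) sV0 by (rule span_minimal)
  show "V0 \<subseteq> span (B0 \<union> D)"
  proof
    fix v assume v: "v \<in> V0"
    have "v \<in> span (C \<union> (B0 \<union> D))"
      using assms(4) by (simp add: Un_assoc)
    then obtain c x where cx: "v = c + x" "c \<in> span C" "x \<in> span (B0 \<union> D)"
      unfolding span_Un by blast
    have "x \<in> V0"
      using cx(3) assms(2) sV0 span_minimal by blast
    then have "c \<in> span B0"
      using cx v assms(3) sV0 subspace_diff[of V0 v x] by auto
    then show "v \<in> span (B0 \<union> D)"
      using cx span_mono[of B0 "B0 \<union> D"] span_add by blast
  qed
qed

lemma sum_space_UNIV_subspaceE:
  assumes "sum_space J X = UNIV" "subspace W" "J \<subseteq> W" "w \<in> W"
  obtains j p where "w = j + p" "j \<in> J" "p \<in> W \<inter> X"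
proof -
  obtain j p where jp: "w = j + p" "j \<in> J" "p \<in> X"
    using sum_space_UNIVE[OF assms(1)] .
  then have "p \<in> W"
    using assms(2-4) subspace_diff[of W w j] by auto
  then show ?thesis
    using that jp by blast
qed

lemma exists_hyperplane_through:
  assumes sK: "subspace K" and K_psub: "K \<subset> span (K \<union> P)"
  obtains x I where "x \<in> P" "subspace I" "K \<subseteq> I" "x \<notin> I" "span (insert x I) = span (K \<union> P)"
proof -
  obtain B0 where B0: "B0 \<subseteq> K" "independent B0" "K \<subseteq> span B0" "card B0 = dim K"
    by (rule basis_exists)
  obtain B where B: "B0 \<subseteq> B" "B \<subseteq> B0 \<union> P" "independent B" "B0 \<union> P \<subseteq> span B"
    using maximal_independent_subset_extend[of B0 "B0 \<union> P"] B0(2) by blast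
  have span_B: "span B = span (K \<union> P)"
  proof
    show "span B \<subseteq> span (K \<union> P)"
      using B(2) B0(1) by (intro span_mono) blast
    have "K \<union> P \<subseteq> span B"
      using B0(3) B(4) span_mono[OF B(1)] by blast
    then show "span (K \<union> P) \<subseteq> span B"
      by (rule span_minimal[OF _ subspace_span])
  qed
  obtain x where x: "x \<in> B" "x \<notin> B0"
  proof (rule ccontr)
    assume "\<not> thesis"
    then have "span B \<subseteq> K"
      using that span_minimal[OF _ sK, of B] B0(1) by blast
    then show False
      using K_psub span_B by blast
  qed
  define I where "I = span (B - {x})"
  have "K \<subseteq> I"
    using B0(3) span_mono[of B0 "B - {x}"] B(1) x(2) by (auto simp: I_def)
  moreover have "x \<notin> I"
    using B(3) x(1) by (auto simp: I_def dependent_def)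
  moreover have "span (insert x I) = span B"
  proof
    show "span (insert x I) \<subseteq> span B"
      using x(1) span_mono[of "B - {x}" B] by (intro span_minimal[OF _ subspace_span])
        (auto simp: I_def intro: span_base)
    show "span B \<subseteq> span (insert x I)"
      by (rule span_mono) (auto simp: I_def intro: span_base)
  qed
  moreover have "x \<in> P"
    using x B(2) by blast
  ultimately show ?thesis
    using that[of x I] span_B by (simp add: I_def)
qed

end

context finite_dimensional_vector_space
begin

lemma dim_inter_supplement:
  assumes "subspace W" "subspace V0" "sum_space W V0 = UNIV"
  shows "dim (W \<inter> V0) = dim W + dim V0 - dimension"
  using dim_sums_Int[OF assms(1,2)] assms(3) by (simp add: sum_space_def dimension_def)

lemma linear_image_eq_if_dim_eq:
  assumes "Vector_Spaces.linear scale scale g" "inj g" "subspace W" "subspace W'" "g ` W \<subseteq> W'"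
    and "dim W = dim W'"
  shows "g ` W = W'"
proof -
  interpret g: Vector_Spaces.linear scale scale g
    by (rule assms(1))
  interpret pair: finite_dimensional_vector_space_pair_1 scale Basis scale
    by unfold_locales
  have "dim (g ` W) = dim W'"
    using pair.dim_image_eq[OF assms(1)] assms(2,6) by (simp add: inj_on_subset)
  then show ?thesis
    using subspace_dim_equal[OF g.subspace_image[OF assms(3)] assms(4,5)] by simp
qed

lemma complement_adapted_basis:
  assumes sV0: "subspace V0" and sW: "subspace W" and WV0: "sum_space W V0 = UNIV"
  obtains C B0 D where "independent (C \<union> B0 \<union> D)" "span (C \<union> B0 \<union> D) = UNIV"
    "C \<inter> (B0 \<union> D) = {}" "B0 \<inter> D = {}" "span (C \<union> B0) = W"
    "B0 \<subseteq> W \<inter> V0" "D \<subseteq> V0" "span (B0 \<union> D) = V0"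
    "card B0 = dim (W \<inter> V0)" "card B0 + card D = dim V0"
proof -
  obtain B0 where B0: "B0 \<subseteq> W \<inter> V0" "independent B0" "W \<inter> V0 \<subseteq> span B0" "card B0 = dim (W \<inter> V0)"
    by (rule basis_exists)
  obtain B where B: "B0 \<subseteq> B" "B \<subseteq> W" "independent B" "W \<subseteq> span B"
    using maximal_independent_subset_extend[of B0 W] B0(1,2) by blast
  obtain BB where BB: "B \<subseteq> BB" "BB \<subseteq> B \<union> V0" "independent BB" "B \<union> V0 \<subseteq> span BB"
    using maximal_independent_subset_extend[of B "B \<union> V0"] B(3) by blast
  define C where "C = B - B0"
  define D where "D = BB - B"
  have BB_eq: "BB = C \<union> B0 \<union> D" and B_eq: "B = C \<union> B0"
    and disjoint: "C \<inter> (B0 \<union> D) = {}" "B0 \<inter> D = {}" and D_V0: "D \<subseteq> V0"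
    using B(1) BB(1,2) by (auto simp: C_def D_def)
  have span_B: "span B = W"
    using B(2,4) sW span_minimal by (metis span_subspace)
  have "W \<union> V0 \<subseteq> span BB"
    using B(4) BB(4) span_mono[OF BB(1)] by blast
  then have span_BB: "span BB = UNIV"
    using WV0 sum_space_subspace_eq_span[OF sW sV0] by (metis span_minimal subspace_span top.extremum_uniqueI)
  have "span C \<inter> V0 \<subseteq> span B0"
    using B0(3) span_B span_mono[of C B] by (auto simp: B_eq)
  then have span_B0D: "span (B0 \<union> D) = V0"
    using span_supplement_part[OF sV0] B0(1) D_V0 span_BB BB_eq by auto
  have "independent (B0 \<union> D)"
    using independent_mono[OF BB(3), of "B0 \<union> D"] BB_eq by auto
  then have "card B0 + card D = dim V0"
    using span_B0D disjoint(2) finiteI_independent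
    by (metis card_Un_disjoint dim_eq_card_independent dim_span finite_Un)
  then show ?thesis
    using that[of C B0 D] BB(3) span_BB span_B B0(1,4) D_V0 span_B0D disjoint unfolding BB_eq B_eq
    by blast
qed

lemma exists_AT_map:
  assumes sV0: "subspace V0" and sW: "subspace W" and WV0: "sum_space W V0 = UNIV"
    and sW': "subspace W'" and W'V0: "sum_space W' V0 = UNIV" and dim_eq: "dim W = dim W'"
  shows "\<exists>g\<in>AT scale V0. g ` W = W'"
proof -
  obtain C B0 D where basis: "independent (C \<union> B0 \<union> D)" "span (C \<union> B0 \<union> D) = UNIV"
    and disj: "C \<inter> (B0 \<union> D) = {}" "B0 \<inter> D = {}" and span_CB0: "span (C \<union> B0) = W"
    and B0: "B0 \<subseteq> W \<inter> V0" and D: "D \<subseteq> V0" "span (B0 \<union> D) = V0"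
    and card: "card B0 = dim (W \<inter> V0)" "card B0 + card D = dim V0"
    by (rule complement_adapted_basis[OF sV0 sW WV0])
  obtain C' B0' D' where basis': "independent (C' \<union> B0' \<union> D')" "span (C' \<union> B0' \<union> D') = UNIV"
    "C' \<inter> (B0' \<union> D') = {}" "B0' \<inter> D' = {}" "span (C' \<union> B0') = W'"
    and B0': "B0' \<subseteq> W' \<inter> V0" and D': "D' \<subseteq> V0" "span (B0' \<union> D') = V0"
    and card': "card B0' = dim (W' \<inter> V0)" "card B0' + card D' = dim V0"
    by (rule complement_adapted_basis[OF sV0 sW' W'V0])
  have "card B0 = card B0'"
    using card(1) card'(1) dim_inter_supplement[OF sW sV0 WV0] dim_inter_supplement[OF sW' sV0 W'V0] dim_eq
    by simp
  moreover have "finite B0" "finite D" "finite B0'" "finite D'"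
    using finiteI_independent basis basis' by (auto dest: finite_subset[rotated])
  ultimately obtain p0 pD where p0: "bij_betw p0 B0 B0'" and pD: "bij_betw pD D D'"
    using card(2) card'(2) finite_same_card_bij by (metis add_left_cancel)
  have "\<exists>w\<in>W'. w - c \<in> V0" for c
  proof -
    obtain w v where "c = w + v" "w \<in> W'" "v \<in> V0"
      using sum_space_UNIVE[OF W'V0] .
    then show ?thesis
      using subspace_neg[OF sV0] by force
  qed
  then obtain \<phi> where \<phi>: "\<And>c. \<phi> c \<in> W' \<and> \<phi> c - c \<in> V0"
    by metis
  interpret pair: vector_space_pair scale scale
    by unfold_locales
  define g where "g = pair.construct (C \<union> B0 \<union> D) (\<lambda>b. if b \<in> C then \<phi> b else if b \<in> B0 then p0 b else pD b)"
  have lin: "Vector_Spaces.linear scale scale g"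
    unfolding g_def using pair.linear_construct[OF basis(1)] .
  interpret g: Vector_Spaces.linear scale scale g
    by (rule lin)
  have g_C: "g c = \<phi> c" if "c \<in> C" for c
    using pair.construct_basis[OF basis(1)] that by (simp add: g_def)
  have "g ` B0 = p0 ` B0" "g ` D = pD ` D"
    using pair.construct_basis[OF basis(1)] disj by (auto simp: g_def intro!: image_cong)
  then have image_B0: "g ` B0 = B0'" and image_D: "g ` D = D'"
    using p0 pD by (simp_all add: bij_betw_def)
  have "g b \<in> V0 \<and> b \<in> V0" if "b \<in> B0 \<union> D" for b
    using that image_B0 image_D B0 B0' D(1) D'(1) by blast
  then have "C \<union> B0 \<union> D \<subseteq> {v. g v - v \<in> V0}"
    using \<phi> g_C subspace_diff[OF sV0] by auto
  then have moves_in_V0: "g v - v \<in> V0" for v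
    using span_minimal[OF _ subspace_moved_within[OF lin sV0]] basis(2) by blast
  have "V0 = g ` span (B0 \<union> D)"
    using D'(2) g.span_image[of "B0 \<union> D"] image_B0 image_D by (simp add: image_Un)
  then have surj: "surj g"
    using surj_if_moves_within[OF lin _ moves_in_V0] by blast
  then have inj: "inj g"
    by (rule linear_surj_imp_inj[OF lin])
  have "g ` (C \<union> B0) \<subseteq> W'"
    using g_C image_B0 \<phi> B0' by auto
  then have "g ` W = W'"
    using span_CB0 g.span_image[of "C \<union> B0"] span_minimal[OF _ sW'] linear_image_eq_if_dim_eq[OF lin inj sW sW']
      dim_eq by metis
  moreover have "g \<in> AT scale V0"
    using lin surj inj moves_in_V0 by (simp add: AT_def GLgrp_def bij_def)
  ultimately show ?thesis
    by blast
qed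

lemma transitive_on_dims_AT:
  assumes "subspace V0"
  shows "transitive_on_dims scale (AT scale V0) (PVrel scale V0)"
  using exists_AT_map[OF assms] by (auto simp: transitive_on_dims_def PVrel_def)

lemma transitive_on_dims_GLgrp: "transitive_on_dims scale (GLgrp scale) (PV scale)"
proof -
  have "sum_space W UNIV = UNIV" if "subspace W" for W
    using subspace_0[OF that] by (force simp: sum_space_def)
  then show ?thesis
    using exists_AT_map[OF subspace_UNIV] by (auto simp: transitive_on_dims_def PV_def AT_def)
qed

end

lemma fin_dim_imp_finite_dimensional_vector_space:
  assumes "vector_space s" "fin_dim s"
  obtains B where "finite_dimensional_vector_space s B"
proof -
  interpret vector_space s by fact
  obtain B where B: "finite B" "span B = UNIV"
    using assms(2) by (auto simp: fin_dim_def)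
  obtain B' where B': "B' \<subseteq> B" "independent B'" "B \<subseteq> span B'"
    by (rule maximal_independent_subset)
  have "span B' = UNIV"
    using B(2) B'(3) span_mono span_span by (metis top.extremum_uniqueI)
  moreover have "finite B'"
    using B(1) B'(1) finite_subset by blast
  ultimately have "finite_dimensional_vector_space s B'"
    using B'(2) by unfold_locales
  then show ?thesis
    by (rule that)
qed

section \<open>Formed spaces\<close>

locale formed_space = vector_space s
  for s :: "'k::field \<Rightarrow> 'e::ab_group_add \<Rightarrow> 'e" +
  fixes \<sigma> :: "'k \<Rightarrow> 'k" and \<epsilon> :: 'k and \<Lambda> :: "'k set" and q :: "'e \<Rightarrow> 'e \<Rightarrow> 'k"
  assumes form_param: "form_param \<sigma> \<epsilon> \<Lambda>" and sesquilinear: "sesquilinear s \<sigma> q"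
begin

abbreviation \<omega> where "\<omega> \<equiv> omega \<sigma> \<epsilon> q"

abbreviation Q where "Q v \<equiv> q v v"

abbreviation orth where "orth \<equiv> perp \<sigma> \<epsilon> q"

abbreviation rad where "rad \<equiv> radical \<sigma> \<epsilon> \<Lambda> q"

abbreviation isotropic_set where "isotropic_set \<equiv> isotropic \<sigma> \<epsilon> \<Lambda> q"

lemma sigma_add [simp]: "\<sigma> (a + b) = \<sigma> a + \<sigma> b"
  and sigma_mult [simp]: "\<sigma> (a * b) = \<sigma> a * \<sigma> b"
  and sigma_sigma [simp]: "\<sigma> (\<sigma> a) = a"
  using form_param by (simp_all add: form_param_def field_involution_def)

lemma sigma_zero [simp]: "\<sigma> 0 = 0"
  using sigma_add[of 0 0] by (metis add_cancel_right_right)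

lemma sigma_minus [simp]: "\<sigma> (- a) = - \<sigma> a"
  using sigma_add[of a "- a"] by (simp add: eq_neg_iff_add_eq_0 add.commute)

lemma sigma_diff [simp]: "\<sigma> (a - b) = \<sigma> a - \<sigma> b"
  using sigma_add[of a "- b"] by simp

lemma sigma_eq_0_iff [simp]: "\<sigma> a = 0 \<longleftrightarrow> a = 0"
  by (metis sigma_zero sigma_sigma)

lemma sigma_one [simp]: "\<sigma> 1 = 1"
  using sigma_mult[of 1 "\<sigma> 1"] sigma_sigma[of 1] by (metis mult_1 mult.commute sigma_eq_0_iff
      mult_cancel_left2 one_neq_zero)

lemma eps_sigma_eps: "\<epsilon> * \<sigma> \<epsilon> = 1"
  using form_param by (simp add: form_param_def)

lemma sigma_eps_eps: "\<sigma> \<epsilon> * \<epsilon> = 1"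
  using eps_sigma_eps by (simp add: mult.commute)

lemma Lambda_zero [simp]: "0 \<in> \<Lambda>"
  and Lambda_add: "a \<in> \<Lambda> \<Longrightarrow> b \<in> \<Lambda> \<Longrightarrow> a + b \<in> \<Lambda>"
  and Lambda_uminus: "a \<in> \<Lambda> \<Longrightarrow> - a \<in> \<Lambda>"
  and Lambda_min: "c - \<epsilon> * \<sigma> c \<in> \<Lambda>"
  and Lambda_max: "a \<in> \<Lambda> \<Longrightarrow> a + \<epsilon> * \<sigma> a = 0"
  using form_param by (auto simp: form_param_def)

lemma Lambda_diff: "a \<in> \<Lambda> \<Longrightarrow> b \<in> \<Lambda> \<Longrightarrow> a - b \<in> \<Lambda>"
  using Lambda_add[of a "- b"] Lambda_uminus[of b] by simp

lemma q_add_left: "q (u + v) w = q u w + q v w"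
  and q_add_right: "q u (v + w) = q u v + q u w"
  and q_scale_left: "q (s a v) w = \<sigma> a * q v w"
  and q_scale_right: "q v (s a w) = q v w * a"
  using sesquilinear by (simp_all add: sesquilinear_def)

lemma q_zero_left [simp]: "q 0 w = 0"
  using q_scale_left[of 0 w w] by simp

lemma q_zero_right [simp]: "q w 0 = 0"
  using q_scale_right[of w 0 w] by simp

lemma q_minus_left: "q (- u) w = - q u w"
  using q_add_left[of u "- u" w] by (simp add: eq_neg_iff_add_eq_0 add.commute)

lemma q_minus_right: "q w (- u) = - q w u"
  using q_add_right[of w u "- u"] by (simp add: eq_neg_iff_add_eq_0 add.commute)

lemma q_diff_left: "q (u - v) w = q u w - q v w"
  using q_add_left[of u "- v" w] q_minus_left by simp

lemma q_diff_right: "q w (u - v) = q w u - q w v"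
  using q_add_right[of w u "- v"] q_minus_right by simp

lemmas q_simps = q_add_left q_add_right q_scale_left q_scale_right
  q_minus_left q_minus_right q_diff_left q_diff_right

lemma omega_add_left: "\<omega> (u + v) w = \<omega> u w + \<omega> v w"
  and omega_add_right: "\<omega> w (u + v) = \<omega> w u + \<omega> w v"
  and omega_scale_left: "\<omega> (s a v) w = \<sigma> a * \<omega> v w"
  and omega_scale_right: "\<omega> v (s a w) = \<omega> v w * a"
  and omega_minus_left: "\<omega> (- u) w = - \<omega> u w"
  and omega_minus_right: "\<omega> w (- u) = - \<omega> w u"
  and omega_diff_left: "\<omega> (u - v) w = \<omega> u w - \<omega> v w"
  and omega_diff_right: "\<omega> w (u - v) = \<omega> w u - \<omega> w v"
  by (simp_all add: omega_def q_simps algebra_simps)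

lemma omega_zero_left [simp]: "\<omega> 0 w = 0"
  and omega_zero_right [simp]: "\<omega> w 0 = 0"
  by (simp_all add: omega_def)

lemmas omega_simps = omega_add_left omega_add_right omega_scale_left omega_scale_right
  omega_minus_left omega_minus_right omega_diff_left omega_diff_right

lemma omega_commute: "\<omega> w v = \<epsilon> * \<sigma> (\<omega> v w)"
proof -
  have "\<epsilon> * \<sigma> (\<omega> v w) = \<epsilon> * \<sigma> (q v w) + (\<epsilon> * \<sigma> \<epsilon>) * q w v"
    by (simp add: omega_def algebra_simps)
  then show ?thesis
    by (simp add: eps_sigma_eps omega_def)
qed

lemma omega_eq_0_commute: "\<omega> v w = 0 \<longleftrightarrow> \<omega> w v = 0"
  using omega_commute[of v w] omega_commute[of w v] by auto

lemma omega_sum_right: "\<omega> x (\<Sum>a\<in>A. f a) = (\<Sum>a\<in>A. \<omega> x (f a))"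
  by (induction A rule: infinite_finite_induct) (simp_all add: omega_add_right)

lemma Q_add: "Q (u + v) - (Q u + Q v + \<omega> u v) \<in> \<Lambda>"
proof -
  have "Q (u + v) - (Q u + Q v + \<omega> u v) = q v u - \<epsilon> * \<sigma> (q v u)"
    by (simp add: q_simps omega_def algebra_simps)
  then show ?thesis
    using Lambda_min by simp
qed

lemma Q_scale: "Q (s a v) = \<sigma> a * Q v * a"
  by (simp add: q_simps)

lemma omega_self_eq_0: "Q x \<in> \<Lambda> \<Longrightarrow> \<omega> x x = 0"
  using Lambda_max by (simp add: omega_def)

lemma mem_orth_iff: "v \<in> orth T \<longleftrightarrow> (\<forall>t\<in>T. \<omega> t v = 0)"
  using omega_eq_0_commute by (auto simp: perp_def)

lemma orthD:
  assumes "v \<in> orth T" "t \<in> T"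
  shows "\<omega> v t = 0" "\<omega> t v = 0"
  using assms mem_orth_iff[of v T] by (auto simp: perp_def)

lemma orth_antimono: "A \<subseteq> B \<Longrightarrow> orth B \<subseteq> orth A"
  by (auto simp: perp_def)

lemma subspace_orth: "subspace (orth T)"
  by (simp add: subspace_def perp_def omega_simps)

lemma orth_span [simp]: "orth (span T) = orth T"
proof
  show "orth (span T) \<subseteq> orth T"
    using span_superset by (auto simp: perp_def)
  show "orth T \<subseteq> orth (span T)"
  proof
    fix v assume "v \<in> orth T"
    then have "T \<subseteq> orth {v}"
      unfolding mem_orth_iff by (auto simp: perp_def)
    then have "span T \<subseteq> orth {v}"
      using span_minimal subspace_orth by blast
    then show "v \<in> orth (span T)"
      unfolding mem_orth_iff by (auto simp: perp_def)
  qed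
qed

lemma subspace_omega_kernel: "subspace {v. \<omega> y v = 0}"
  by (simp add: subspace_def omega_simps)

lemma span_insert_omega_kernel:
  assumes sW: "subspace W" and "x \<in> W" "\<omega> y x \<noteq> 0"
  shows "span (insert x (W \<inter> {v. \<omega> y v = 0})) = W"
proof
  show "W \<subseteq> span (insert x (W \<inter> {v. \<omega> y v = 0}))"
  proof
    fix w assume w: "w \<in> W"
    have "w - s (\<omega> y w / \<omega> y x) x \<in> W"
      using subspace_diff[OF sW w subspace_scale[OF sW assms(2)]] .
    moreover have "\<omega> y (w - s (\<omega> y w / \<omega> y x) x) = 0"
      using assms(3) by (simp add: omega_simps)
    ultimately have "w - s (\<omega> y w / \<omega> y x) x \<in> W \<inter> {v. \<omega> y v = 0}"
      by blast
    then show "w \<in> span (insert x (W \<inter> {v. \<omega> y v = 0}))"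
      by (metis span_breakdown_eq span_base)
  qed
  have "insert x (W \<inter> {v. \<omega> y v = 0}) \<subseteq> W"
    using assms(2) by blast
  then show "span (insert x (W \<inter> {v. \<omega> y v = 0})) \<subseteq> W"
    using sW by (rule span_minimal)
qed

lemma rad_subset_orth_UNIV: "rad \<subseteq> orth UNIV"
  by (auto simp: radical_def mem_orth_iff)

lemma span_rad_subset_orth_UNIV: "span rad \<subseteq> orth UNIV"
  using rad_subset_orth_UNIV subspace_orth by (rule span_minimal)

lemma mem_radical_iff: "v \<in> rad \<longleftrightarrow> v \<in> orth UNIV \<and> Q v \<in> \<Lambda>"
  by (auto simp: radical_def mem_orth_iff)

lemma orth_orth_finite:
  assumes "finite S" "x \<in> orth (orth S)"
  shows "\<exists>t\<in>span S. x - t \<in> orth UNIV"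
  using assms
proof (induction S arbitrary: x rule: finite_induct)
  case empty
  then show ?case
    by (auto simp: perp_def intro: bexI[of _ 0])
next
  case (insert i S)
  show ?case
  proof (cases "orth S \<subseteq> orth {i}")
    case True
    then have "x \<in> orth (orth S)"
      using insert.prems by (auto simp: perp_def)
    then obtain t where "t \<in> span S" "x - t \<in> orth UNIV"
      using insert.IH by blast
    then show ?thesis
      using span_mono[of S "insert i S"] by blast
  next
    case False
    then obtain u0 where u0: "u0 \<in> orth S" "\<omega> i u0 \<noteq> 0"
      unfolding subset_iff mem_orth_iff by blast
    define u1 where "u1 = s (inverse (\<omega> i u0)) u0"
    have iu1: "\<omega> i u1 = 1" and Su1: "u1 \<in> orth S"
      using u0 subspace_orth by (simp_all add: u1_def omega_scale_right subspace_scale)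
    define x' where "x' = x - s (\<sigma> (\<omega> x u1)) i"
    have "\<omega> x' u = 0" if u: "u \<in> orth S" for u
    proof -
      define u' where "u' = u - s (\<omega> i u) u1"
      have "u' \<in> orth S"
        using u Su1 subspace_orth by (simp add: u'_def subspace_diff subspace_scale)
      moreover have "\<omega> i u' = 0"
        using iu1 by (simp add: u'_def omega_simps)
      ultimately have "u' \<in> orth (insert i S)"
        by (auto simp: mem_orth_iff)
      then have "\<omega> x u' = 0"
        using insert.prems by (auto simp: perp_def)
      then show ?thesis
        by (simp add: u'_def x'_def omega_simps)
    qed
    then have "x' \<in> orth (orth S)"
      by (auto simp: perp_def)
    then obtain t' where t': "t' \<in> span S" "x' - t' \<in> orth UNIV"
      using insert.IH by blast
    have "t' + s (\<sigma> (\<omega> x u1)) i \<in> span (insert i S)"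
      using t'(1) span_mono[of S "insert i S"] by (blast intro: span_add span_scale span_base)
    moreover have "x - (t' + s (\<sigma> (\<omega> x u1)) i) = x' - t'"
      by (simp add: x'_def algebra_simps)
    ultimately show ?thesis
      using t'(2) by metis
  qed
qed

text \<open>All multiples are required to be singular because \<open>\<Lambda>\<close> is not assumed to be stable
  under \<open>c \<mapsto> \<sigma> a * c * a\<close>.\<close>

definition isotropic_line :: "'e \<Rightarrow> bool" where
  "isotropic_line x \<longleftrightarrow> (\<forall>a. Q (s a x) \<in> \<Lambda>)"

lemma isotropic_line_omega_self: "isotropic_line x \<Longrightarrow> \<omega> x x = 0"
  unfolding isotropic_line_def using omega_self_eq_0[of x] by (metis scale_one)

lemma isotropic_line_scale: "isotropic_line x \<Longrightarrow> isotropic_line (s k x)"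
  by (simp add: isotropic_line_def)

lemma isotropic_subspace_line:
  "isotropic_set W \<Longrightarrow> subspace W \<Longrightarrow> x \<in> W \<Longrightarrow> isotropic_line x"
  unfolding isotropic_def isotropic_line_def by (simp add: subspace_scale)

lemma isotropic_span_insert:
  assumes "subspace I" "isotropic_set I" "y \<in> orth I" "isotropic_line y"
  shows "isotropic_set (span (insert y I))"
proof -
  have yy: "\<omega> y y = 0"
    using assms(4) isotropic_line_omega_self by blast
  have Iy: "\<omega> i y = 0" and yI: "\<omega> y i = 0" if "i \<in> I" for i
    using orthD[OF assms(3) that] by simp_all
  have decompose: "\<exists>i a. i \<in> I \<and> v = i + s a y" if v: "v \<in> span (insert y I)" for v
  proof -
    obtain a where "v - s a y \<in> span I"
      using v span_breakdown_eq by blast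
    then show ?thesis
      using assms(1) by (metis diff_add_cancel span_eq_iff)
  qed
  show ?thesis
    unfolding isotropic_def
  proof (intro conjI ballI)
    fix v w assume "v \<in> span (insert y I)" "w \<in> span (insert y I)"
    then obtain i a i' b where "i \<in> I" "v = i + s a y" "i' \<in> I" "w = i' + s b y"
      using decompose by metis
    then show "\<omega> v w = 0"
      using assms(2) Iy yI yy by (simp add: omega_simps isotropic_def)
  next
    fix v assume "v \<in> span (insert y I)"
    then obtain i a where ia: "i \<in> I" "v = i + s a y"
      using decompose by metis
    have "Q (i + s a y) - (Q i + Q (s a y) + \<omega> i (s a y)) \<in> \<Lambda>"
      by (rule Q_add)
    moreover have "Q i + Q (s a y) \<in> \<Lambda>"
      using assms(2,4) ia(1) by (simp add: isotropic_def isotropic_line_def Lambda_add)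
    ultimately show "Q v \<in> \<Lambda>"
      using Lambda_add Iy[OF ia(1)] ia(2) by (fastforce simp: omega_scale_right)
  qed
qed

lemma isotropic_line_shift:
  assumes x: "isotropic_line x" and ux: "\<omega> u x \<noteq> 0"
  shows "isotropic_line (u + s (- Q u / \<omega> u x) x)"
  unfolding isotropic_line_def
proof
  fix b
  define a where "a = - Q u / \<omega> u x"
  have "Q (s b u + s (b * a) x) - (Q (s b u) + Q (s (b * a) x) + \<omega> (s b u) (s (b * a) x)) \<in> \<Lambda>"
    by (rule Q_add)
  moreover have "Q (s (b * a) x) \<in> \<Lambda>"
    using x by (simp add: isotropic_line_def)
  moreover have "Q (s b u) + \<omega> (s b u) (s (b * a) x) = \<sigma> b * b * (Q u + \<omega> u x * a)"
    by (simp add: Q_scale omega_simps algebra_simps)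
  then have "Q (s b u) + \<omega> (s b u) (s (b * a) x) = 0"
    using ux by (simp add: a_def)
  then have "Q (s b u + s (b * a) x)
      = (Q (s b u + s (b * a) x) - (Q (s b u) + Q (s (b * a) x) + \<omega> (s b u) (s (b * a) x)))
        + Q (s (b * a) x)"
    by (simp add: algebra_simps)
  ultimately have "Q (s b u + s (b * a) x) \<in> \<Lambda>"
    by (metis Lambda_add)
  then show "Q (s b (u + s a x)) \<in> \<Lambda>"
    by (simp add: scale_right_distrib)
qed

lemma not_in_orth_orth_common_witness:
  assumes "x \<notin> orth (orth S)" "y \<notin> orth (orth S)"
  obtains u where "u \<in> orth S" "\<omega> x u \<noteq> 0" "\<omega> y u \<noteq> 0"
proof -
  obtain u1 u2 where u1: "u1 \<in> orth S" "\<omega> x u1 \<noteq> 0" and u2: "u2 \<in> orth S" "\<omega> y u2 \<noteq> 0"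
    using assms by (auto simp: perp_def[of _ _ _ "orth S"])
  consider "\<omega> y u1 \<noteq> 0" | "\<omega> x u2 \<noteq> 0" | "\<omega> y u1 = 0" "\<omega> x u2 = 0"
    by blast
  then show ?thesis
  proof cases
    case 3
    then have "\<omega> x (u1 + u2) \<noteq> 0" "\<omega> y (u1 + u2) \<noteq> 0"
      using u1 u2 by (simp_all add: omega_add_right)
    moreover have "u1 + u2 \<in> orth S"
      using u1 u2 subspace_orth by (blast intro: subspace_add)
    ultimately show ?thesis
      using that by blast
  qed (use that u1 u2 in blast)+
qed

lemma omega_orthogonal_sum:
  assumes "\<omega> x x = 0" "\<omega> y y = 0" "c \<in> orth {x, y}" "c' \<in> orth {x, y}"
  shows "\<omega> (c + s a x + s b y) (c' + s a' x + s b' y)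
    = \<omega> c c' + \<sigma> a * b' * \<omega> x y + \<sigma> b * a' * \<omega> y x"
  using assms(1,2) orthD[OF assms(3)] orthD[OF assms(4)] by (simp add: omega_simps algebra_simps)

lemma Q_orthogonal_sum:
  assumes "isotropic_line x" "isotropic_line y" "c \<in> orth {x, y}"
  shows "Q (c + s a x + s b y) - (Q c + \<sigma> a * b * \<omega> x y) \<in> \<Lambda>"
proof -
  have cx: "\<omega> c x = 0" and cy: "\<omega> c y = 0"
    using orthD[OF assms(3)] by simp_all
  define A where "A = Q (c + s a x + s b y) - (Q (c + s a x) + Q (s b y) + \<omega> (c + s a x) (s b y))"
  define B where "B = Q (c + s a x) - (Q c + Q (s a x) + \<omega> c (s a x))"
  have "A \<in> \<Lambda>" "B \<in> \<Lambda>"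
    unfolding A_def B_def by (rule Q_add)+
  moreover have "Q (s a x) \<in> \<Lambda>" "Q (s b y) \<in> \<Lambda>"
    using assms(1,2) by (simp_all add: isotropic_line_def)
  moreover have "Q (c + s a x + s b y) - (Q c + \<sigma> a * b * \<omega> x y) = A + B + Q (s a x) + Q (s b y)"
    unfolding A_def B_def by (simp add: omega_simps cx cy algebra_simps)
  ultimately show ?thesis
    by (metis Lambda_add)
qed

end

locale finite_formed_space = formed_space s \<sigma> \<epsilon> \<Lambda> q + finite_dimensional_vector_space s Basis
  for s :: "'k::field \<Rightarrow> 'e::ab_group_add \<Rightarrow> 'e" and \<sigma> \<epsilon> \<Lambda> q and Basis :: "'e set"
begin

lemma orth_orth:
  assumes "x \<in> orth (orth T)"
  shows "\<exists>t\<in>span T. x - t \<in> orth UNIV"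
proof -
  obtain B where B: "B \<subseteq> span T" "independent B" "span T \<subseteq> span B" "card B = dim (span T)"
    by (rule basis_exists)
  have span_B: "span B = span T"
    using B(1,3) span_minimal[OF B(1) subspace_span] by blast
  have "orth T = orth B"
    using orth_span[of T] orth_span[of B] span_B by simp
  then show ?thesis
    using orth_orth_finite[OF finiteI_independent[OF B(2)]] assms span_B by simp
qed

section \<open>Isometries\<close>

definition isometry :: "('e \<Rightarrow> 'e) \<Rightarrow> bool" where
  "isometry g \<longleftrightarrow> Vector_Spaces.linear s s g \<and> bij g \<and> (\<forall>v w. \<omega> (g v) (g w) = \<omega> v w)
     \<and> (\<forall>v. Q (g v) - Q v \<in> \<Lambda>)"

lemma isometry_linear: "isometry g \<Longrightarrow> Vector_Spaces.linear s s g"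
  and isometry_inj: "isometry g \<Longrightarrow> inj g"
  and isometry_omega: "isometry g \<Longrightarrow> \<omega> (g v) (g w) = \<omega> v w"
  and isometry_Q: "isometry g \<Longrightarrow> Q (g v) - Q v \<in> \<Lambda>"
  by (simp_all add: isometry_def bij_def)

lemma isometry_id: "isometry id"
  by (simp add: isometry_def linear_id)

lemma isometry_comp: "isometry g \<Longrightarrow> isometry h \<Longrightarrow> isometry (h \<circ> g)"
  unfolding isometry_def
proof (elim conjE, intro conjI allI)
  fix v
  assume "\<forall>v. Q (g v) - Q v \<in> \<Lambda>" "\<forall>v. Q (h v) - Q v \<in> \<Lambda>"
  then show "Q ((h \<circ> g) v) - Q v \<in> \<Lambda>"
    using Lambda_add[of "Q (h (g v)) - Q (g v)" "Q (g v) - Q v"] by simp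
qed (auto intro: Vector_Spaces.linear_compose bij_comp)

text \<open>Injectivity is automatic: the kernel of a map preserving \<open>\<omega>\<close> lies in the radical of \<open>\<omega>\<close>.\<close>

lemma isometryI:
  assumes lin: "Vector_Spaces.linear s s g"
    and omega: "\<And>v w. \<omega> (g v) (g w) = \<omega> v w"
    and Q: "\<And>v. Q (g v) - Q v \<in> \<Lambda>"
    and fixes_radical: "\<And>v. v \<in> orth UNIV \<Longrightarrow> g v = v"
  shows "isometry g"
proof -
  interpret g: Vector_Spaces.linear s s g by (rule lin)
  have "inj g"
  proof (rule injI)
    fix a b assume "g a = g b"
    then have "g (a - b) = 0"
      by (simp add: g.diff)
    moreover have "a - b \<in> orth UNIV"
      using omega[of "a - b"] calculation by (simp add: perp_def)
    ultimately show "a = b"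
      using fixes_radical by force
  qed
  then have "bij g"
    using linear_inj_imp_surj[OF lin] by (simp add: bij_def)
  then show ?thesis
    using lin omega Q by (simp add: isometry_def)
qed

lemma isometry_in_isom_grp:
  assumes "isometry g"
  shows "g \<in> isom_grp s \<sigma> \<epsilon> \<Lambda> q"
proof -
  interpret g: Vector_Spaces.linear s s g
    using assms by (rule isometry_linear)
  have "sesquilinear s \<sigma> (\<lambda>v w. q (g v) (g w) - q v w)"
    by (simp add: sesquilinear_def g.add g.scale q_simps algebra_simps)
  moreover have "q (g w) (g v) - q w v = - (\<epsilon> * \<sigma> (q (g v) (g w) - q v w))" for v w
    using isometry_omega[OF assms, of w v] by (simp add: omega_def algebra_simps)
  ultimately show ?thesis
    using assms isometry_Q[OF assms] unfolding isom_grp_def trivial_form_def isometry_def by blast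
qed

lemma isometry_Q_in_Lambda: "isometry g \<Longrightarrow> Q v \<in> \<Lambda> \<Longrightarrow> Q (g v) \<in> \<Lambda>"
  using isometry_Q[of g v] Lambda_add[of "Q (g v) - Q v" "Q v"] by simp

lemma isometry_isotropic_line:
  assumes g: "isometry g" and "isotropic_line w"
  shows "isotropic_line (g w)"
proof -
  interpret g: Vector_Spaces.linear s s g
    using g by (rule isometry_linear)
  show ?thesis
    using assms(2) isometry_Q_in_Lambda[OF g] by (simp add: isotropic_line_def flip: g.scale)
qed

lemma isometry_image:
  assumes g: "isometry g" and "subspace W" "isotropic_set W"
  shows "subspace (g ` W)" "isotropic_set (g ` W)" "dim (g ` W) = dim W"
proof -
  interpret g: Vector_Spaces.linear s s g
    using g by (rule isometry_linear)
  interpret pair: finite_dimensional_vector_space_pair_1 s Basis s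
    by unfold_locales
  show "subspace (g ` W)"
    using g.subspace_image[OF assms(2)] .
  show "isotropic_set (g ` W)"
    using assms(3) isometry_omega[OF g] isometry_Q_in_Lambda[OF g] by (auto simp: isotropic_def)
  show "dim (g ` W) = dim W"
    using pair.dim_image_eq[OF isometry_linear[OF g]] isometry_inj[OF g] by (simp add: inj_on_subset)
qed

text \<open>Both isometries below are built this way: a hyperbolic pair \<open>x, y\<close> goes to another one
  \<open>x', y'\<close>, and the component orthogonal to the pair is changed without affecting \<open>\<omega>\<close> and \<open>Q\<close>.\<close>

lemma isometry_from_hyperbolic_pairs:
  assumes x: "isotropic_line x" and y: "isotropic_line y" and xy: "\<omega> x y = 1"
    and x': "isotropic_line x'" and y': "isotropic_line y'" and x'y': "\<omega> x' y' = 1"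
    and lin: "Vector_Spaces.linear s s g"
    and v_eq: "\<And>v. v = c v + s (a v) x + s (b v) y" and c: "\<And>v. c v \<in> orth {x, y}"
    and g_eq: "\<And>v. g v = p v + s (a v) x' + s (b v) y'" and p: "\<And>v. p v \<in> orth {x', y'}"
    and p_omega: "\<And>v w. \<omega> (p v) (p w) = \<omega> (c v) (c w)" and p_Q: "\<And>v. Q (p v) - Q (c v) \<in> \<Lambda>"
    and fixes_radical: "\<And>v. v \<in> orth UNIV \<Longrightarrow> g v = v"
  shows "isometry g"
proof (rule isometryI[OF lin _ _ fixes_radical])
  have xx: "\<omega> x x = 0" "\<omega> y y = 0" "\<omega> x' x' = 0" "\<omega> y' y' = 0"
    using x y x' y' isotropic_line_omega_self by blast+
  have yx: "\<omega> y x = \<epsilon>" "\<omega> y' x' = \<epsilon>"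
    using omega_commute[of y x] omega_commute[of y' x'] xy x'y' by simp_all
  fix v w
  have "\<omega> (g v) (g w) = \<omega> (p v) (p w) + \<sigma> (a v) * b w * \<omega> x' y' + \<sigma> (b v) * a w * \<omega> y' x'"
    unfolding g_eq by (rule omega_orthogonal_sum[OF xx(3,4) p p])
  also have "\<dots> = \<omega> (c v) (c w) + \<sigma> (a v) * b w * \<omega> x y + \<sigma> (b v) * a w * \<omega> y x"
    using p_omega xy x'y' yx by simp
  also have "\<dots> = \<omega> v w"
    using omega_orthogonal_sum[OF xx(1,2) c[of v] c[of w], of "a v" "b v" "a w" "b w"] by (simp flip: v_eq)
  finally show "\<omega> (g v) (g w) = \<omega> v w" .
  have "Q (g v) - (Q (p v) + \<sigma> (a v) * b v) \<in> \<Lambda>"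
    using Q_orthogonal_sum[OF x' y' p[of v], of "a v" "b v"] x'y' by (simp flip: g_eq)
  moreover have "Q v - (Q (c v) + \<sigma> (a v) * b v) \<in> \<Lambda>"
    using Q_orthogonal_sum[OF x y c[of v], of "a v" "b v"] xy by (simp flip: v_eq)
  moreover have "Q (g v) - Q v = (Q (g v) - (Q (p v) + \<sigma> (a v) * b v))
      - (Q v - (Q (c v) + \<sigma> (a v) * b v)) + (Q (p v) - Q (c v))"
    by (simp add: algebra_simps)
  ultimately show "Q (g v) - Q v \<in> \<Lambda>"
    using p_Q by (metis Lambda_add Lambda_diff)
qed

lemma hyperbolic_swap:
  assumes x: "isotropic_line x" and y: "isotropic_line y" and xy: "\<omega> x y = 1"
  obtains g where "isometry g" "g x = y" "\<And>v. v \<in> orth {x, y} \<Longrightarrow> g v = v"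
proof -
  have xx: "\<omega> x x = 0" and yy: "\<omega> y y = 0"
    using x y isotropic_line_omega_self by blast+
  have yx: "\<omega> y x = \<epsilon>"
    using omega_commute[of y x] xy by simp
  define a where "a v = \<sigma> \<epsilon> * \<omega> y v" for v
  define b where "b v = \<omega> x v" for v
  define c where "c v = v - s (a v) x - s (b v) y" for v
  define g where "g v = v + s (\<omega> x v * \<sigma> \<epsilon> - \<sigma> \<epsilon> * \<omega> y v) x + s (\<sigma> \<epsilon> * \<omega> y v - \<omega> x v) y" for v
  have lin: "Vector_Spaces.linear s s g"
    unfolding linear_iff g_def
    by (simp add: vector_space_axioms omega_simps scale_left_distrib scale_right_distrib algebra_simps)
  have c_orth: "c v \<in> orth {x, y}" for v
    using xx yy xy yx sigma_eps_eps eps_sigma_eps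
    by (simp add: mem_orth_iff c_def a_def b_def omega_simps mult.assoc[symmetric])
  have c_orth': "c v \<in> orth {y, s (\<sigma> \<epsilon>) x}" for v
    using orthD(1)[OF c_orth[of v], of x] orthD(1)[OF c_orth[of v], of y]
    by (simp add: perp_def omega_scale_right)
  have x': "isotropic_line (s (\<sigma> \<epsilon>) x)" and yx': "\<omega> y (s (\<sigma> \<epsilon>) x) = 1"
    using x yx eps_sigma_eps by (simp_all add: isotropic_line_scale omega_scale_right)
  have v_eq: "v = c v + s (a v) x + s (b v) y" for v
    by (simp add: c_def)
  have g_eq: "g v = c v + s (a v) y + s (b v) (s (\<sigma> \<epsilon>) x)" for v
    by (simp add: g_def c_def a_def b_def algebra_simps scale_left_diff_distrib)
  have fixes_orth: "g v = v" if "v \<in> orth {x, y}" for v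
    using orthD(2)[OF that, of x] orthD(2)[OF that, of y] by (simp add: g_def)
  moreover have "orth UNIV \<subseteq> orth {x, y}"
    by (rule orth_antimono) simp
  ultimately have "isometry g"
    using isometry_from_hyperbolic_pairs[OF x y xy y x' yx' lin v_eq c_orth g_eq c_orth'] by auto
  moreover have "g x = y"
    using xx yx sigma_eps_eps by (simp add: g_def)
  ultimately show ?thesis
    using that[OF _ _ fixes_orth] by blast
qed

lemma eichler_transformation:
  assumes u: "isotropic_line u" and w: "isotropic_line w" and w': "isotropic_line w'"
    and uw: "\<omega> u w = 1" and uw': "\<omega> u w' = 1"
  obtains g where "isometry g" "g u = u" "g w = w'" "\<And>v. v \<in> orth {u, w, w'} \<Longrightarrow> g v = v"
proof -
  have uu: "\<omega> u u = 0" and ww: "\<omega> w w = 0"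
    using u w isotropic_line_omega_self by blast+
  have wu: "\<omega> w u = \<epsilon>" and w'u: "\<omega> w' u = \<epsilon>"
    using omega_commute[of w u] omega_commute[of w' u] uw uw' by simp_all
  define a where "a v = \<sigma> \<epsilon> * \<omega> w v" for v
  define b where "b v = \<omega> u v" for v
  define c where "c v = v - s (a v) u - s (b v) w" for v
  define d where "d v = \<sigma> \<epsilon> * \<omega> w' (c v)" for v
  define p where "p v = c v + s (- d v) u" for v
  define g where "g v = v + s (b v) (w' - w) - s (d v) u" for v
  have lin: "Vector_Spaces.linear s s g"
    unfolding linear_iff g_def d_def c_def a_def b_def
    by (simp add: vector_space_axioms omega_simps scale_left_distrib scale_right_distrib algebra_simps)
  have c_orth: "c v \<in> orth {u, w}" for v
    using uu ww uw wu sigma_eps_eps eps_sigma_eps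
    by (simp add: mem_orth_iff c_def a_def b_def omega_simps mult.assoc[symmetric])
  have v_eq: "v = c v + s (a v) u + s (b v) w" for v
    by (simp add: c_def)
  have g_eq: "g v = p v + s (a v) u + s (b v) w'" for v
    by (simp add: g_def p_def c_def algebra_simps)
  have p_orth: "p v \<in> orth {u, w'}" for v
    using orthD[OF c_orth[of v]] uu w'u sigma_eps_eps eps_sigma_eps
    by (simp add: mem_orth_iff p_def d_def omega_simps mult.assoc[symmetric])
  have p_omega: "\<omega> (p v) (p v') = \<omega> (c v) (c v')" for v v'
    using orthD[OF c_orth[of v]] orthD[OF c_orth[of v']] uu by (simp add: p_def omega_simps)
  have p_Q: "Q (p v) - Q (c v) \<in> \<Lambda>" for v
  proof -
    have "Q (p v) - (Q (c v) + Q (s (- d v) u)) \<in> \<Lambda>"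
      using Q_add[of "c v" "s (- d v) u"] orthD[OF c_orth[of v]] by (simp add: p_def omega_simps)
    moreover have "Q (s (- d v) u) \<in> \<Lambda>"
      using u unfolding isotropic_line_def by blast
    ultimately show ?thesis
      using Lambda_add by fastforce
  qed
  have fixes_orth: "g v = v" if "v \<in> orth {u, w, w'}" for v
    using orthD(2)[OF that, of u] orthD(2)[OF that, of w] orthD(2)[OF that, of w']
    by (simp add: g_def d_def c_def a_def b_def)
  moreover have "orth UNIV \<subseteq> orth {u, w, w'}"
    by (rule orth_antimono) simp
  ultimately have "isometry g"
    using isometry_from_hyperbolic_pairs[OF u w uw u w' uw' lin v_eq c_orth g_eq p_orth p_omega p_Q]
    by auto
  moreover have "g u = u"
    using uu wu sigma_eps_eps by (simp add: g_def d_def c_def a_def b_def)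
  moreover have "g w = w'"
    using ww uw by (simp add: g_def d_def c_def a_def b_def)
  ultimately show ?thesis
    using that[OF _ _ _ fixes_orth] by blast
qed

lemma swap_isotropic_lines:
  assumes x: "isotropic_line x" and y: "isotropic_line y" and xy: "\<omega> x y \<noteq> 0"
    and "x \<in> orth S" "y \<in> orth S" "I \<subseteq> S"
  obtains g where "isometry g" "\<forall>v\<in>S. g v = v" "g ` span (insert x I) = span (insert y I)"
proof -
  define k where "k = inverse (\<omega> x y)"
  have k: "k \<noteq> 0"
    using xy by (simp add: k_def)
  obtain g where g: "isometry g" "g x = s k y" and fixed: "\<And>v. v \<in> orth {x, s k y} \<Longrightarrow> g v = v"
    using hyperbolic_swap[OF x isotropic_line_scale[OF y], of k] xy by (auto simp: k_def omega_scale_right)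
  have "S \<subseteq> orth {x, s k y}"
  proof
    fix t assume "t \<in> S"
    then have "\<omega> t x = 0" "\<omega> t y = 0"
      using orthD(2)[OF assms(4)] orthD(2)[OF assms(5)] by blast+
    then show "t \<in> orth {x, s k y}"
      by (simp add: perp_def omega_scale_right)
  qed
  then have fixes_S: "\<forall>v\<in>S. g v = v"
    using fixed by blast
  interpret g: Vector_Spaces.linear s s g
    using g(1) by (rule isometry_linear)
  have "g ` insert x I = insert (s k y) I"
    using g(2) fixes_S assms(6) by force
  then have "g ` span (insert x I) = span (insert (s k y) I)"
    using g.span_image by metis
  also have "\<dots> = span (insert y I)"
    by (rule span_insert_scale[OF k])
  finally show ?thesis
    using that g(1) fixes_S by blast
qed

text \<open>If \<open>\<omega> x y = 0\<close>, pass through an auxiliary isotropic line pairing nontrivially with both.\<close>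

lemma exchange_isotropic_lines:
  assumes x: "isotropic_line x" and y: "isotropic_line y"
    and xS: "x \<in> orth S" and yS: "y \<in> orth S" and IS: "I \<subseteq> S"
    and x_nondeg: "x \<notin> orth (orth S)" and y_nondeg: "y \<notin> orth (orth S)"
  obtains g where "isometry g" "\<forall>v\<in>S. g v = v" "g ` span (insert x I) = span (insert y I)"
proof (cases "\<omega> x y = 0")
  case False
  then show ?thesis
    using swap_isotropic_lines[OF x y False xS yS IS] that by blast
next
  case True
  obtain u where u: "u \<in> orth S" "\<omega> x u \<noteq> 0" "\<omega> y u \<noteq> 0"
    using not_in_orth_orth_common_witness[OF x_nondeg y_nondeg] by blast
  have ux: "\<omega> u x \<noteq> 0"
    using u(2) omega_eq_0_commute by blast
  define z where "z = u + s (- Q u / \<omega> u x) x"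
  have z: "isotropic_line z"
    unfolding z_def by (rule isotropic_line_shift[OF x ux])
  have "\<omega> x z \<noteq> 0" "\<omega> z y \<noteq> 0"
    using u(2,3) True isotropic_line_omega_self[OF x] omega_eq_0_commute[of y]
    by (auto simp: z_def omega_simps)
  moreover have zS: "z \<in> orth S"
    using u(1) xS subspace_orth unfolding z_def by (blast intro: subspace_add subspace_scale)
  ultimately obtain g1 g2
    where g1: "isometry g1" "\<forall>v\<in>S. g1 v = v" "g1 ` span (insert x I) = span (insert z I)"
      and g2: "isometry g2" "\<forall>v\<in>S. g2 v = v" "g2 ` span (insert z I) = span (insert y I)"
    using swap_isotropic_lines[OF x z _ xS zS IS] swap_isotropic_lines[OF z y _ zS yS IS] by metis
  have "(g2 \<circ> g1) ` span (insert x I) = span (insert y I)"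
    using g1(3) g2(3) by (metis image_comp)
  then show ?thesis
    using that[of "g2 \<circ> g1"] isometry_comp[OF g1(1) g2(1)] g1(2) g2(2) by simp
qed

section \<open>Witt's extension theorem\<close>

text \<open>This is where \<open>rad \<subseteq> J \<subseteq> I\<close> and \<open>J + orth U = UNIV\<close> enter the induction.\<close>

lemma not_in_orth_orth:
  assumes sU: "subspace U" and iU: "isotropic_set U" and JU: "sum_space J (orth U) = UNIV"
    and RJ: "rad \<subseteq> J" and sI: "subspace I" and JI: "J \<subseteq> I"
    and ix: "isotropic_set (span (insert x I))" and xI: "x \<notin> I"
  shows "x \<notin> orth (orth (I \<union> U))"
proof
  assume "x \<in> orth (orth (I \<union> U))"
  then obtain t where t: "t \<in> span (I \<union> U)" "x - t \<in> orth UNIV"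
    using orth_orth by blast
  moreover have "span I = I" "span U = U"
    using sI sU by simp_all
  ultimately obtain i u where iu: "t = i + u" "i \<in> I" "u \<in> U"
    unfolding span_Un by blast
  have I_sub: "I \<subseteq> span (insert x I)" and x_in: "x \<in> span (insert x I)"
    by (auto intro: span_base)
  have omega_ix: "\<omega> a b = 0" if "a \<in> span (insert x I)" "b \<in> span (insert x I)" for a b
    using ix that by (auto simp: isotropic_def)
  have "u \<in> orth UNIV"
  proof -
    have "\<omega> e u = 0" for e
    proof -
      obtain j p where jp: "e = j + p" "j \<in> J" "p \<in> orth U"
        using sum_space_UNIVE[OF JU] .
      have "\<omega> j (x - t) = 0"
        using t(2) orthD(2) by blast
      moreover have "\<omega> j x = 0" "\<omega> j i = 0"
        using jp(2) JI I_sub x_in iu(2) omega_ix by blast+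
      ultimately have "\<omega> j u = 0"
        using iu(1) by (simp add: omega_simps)
      moreover have "\<omega> p u = 0"
        using jp(3) iu(3) by (simp add: perp_def)
      ultimately show ?thesis
        using jp(1) by (simp add: omega_add_left)
    qed
    then show ?thesis
      by (simp add: mem_orth_iff)
  qed
  moreover have "Q u \<in> \<Lambda>"
    using iU iu(3) by (simp add: isotropic_def)
  ultimately have "t \<in> I"
    using mem_radical_iff RJ JI iu sI by (blast intro: subspace_add)
  then have "x - t \<in> span (insert x I)"
    using I_sub x_in by (blast intro: span_diff)
  then have "x - t \<in> rad"
    using t(2) ix by (simp add: mem_radical_iff isotropic_def)
  then have "(x - t) + t \<in> I"
    using RJ JI \<open>t \<in> I\<close> sI by (blast intro: subspace_add)
  then show False
    using xI by simp
qed

lemma witt_hyperplane: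
  assumes JU: "sum_space J (orth U) = UNIV" and sW: "subspace W" and sW': "subspace W'"
    and JW: "J \<subseteq> W \<inter> W'"
    and W_not_sub: "\<not> W \<subseteq> W'" and y: "y \<in> orth (W \<inter> W')"
  obtains x I where "subspace I" "W = span (insert x I)" "x \<in> W \<inter> orth U" "x \<notin> I"
    "W \<inter> W' \<subseteq> I" "y \<in> orth I"
proof (cases "\<exists>x\<in>W \<inter> orth U. \<omega> y x \<noteq> 0")
  case True
  then obtain x where x: "x \<in> W \<inter> orth U" "\<omega> y x \<noteq> 0"
    by blast
  define I where "I = W \<inter> {v. \<omega> y v = 0}"
  have "subspace I"
    unfolding I_def using sW subspace_omega_kernel by (rule subspace_inter)
  moreover have "W = span (insert x I)"
    using span_insert_omega_kernel[OF sW _ x(2)] x(1) by (simp add: I_def)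
  moreover have "W \<inter> W' \<subseteq> I" "y \<in> orth I" "x \<notin> I"
    using y x(2) by (auto simp: I_def perp_def)
  ultimately show ?thesis
    using that x(1) by blast
next
  case False
  have W_eq: "W = span ((W \<inter> W') \<union> (W \<inter> orth U))"
  proof
    show "W \<subseteq> span ((W \<inter> W') \<union> (W \<inter> orth U))"
    proof
      fix w assume "w \<in> W"
      then obtain j p where "w = j + p" "j \<in> J" "p \<in> W \<inter> orth U"
        using sum_space_UNIV_subspaceE[OF JU sW] JW by blast
      then show "w \<in> span ((W \<inter> W') \<union> (W \<inter> orth U))"
        using JW by (auto intro: span_add span_base)
    qed
    show "span ((W \<inter> W') \<union> (W \<inter> orth U)) \<subseteq> W"
      using sW by (intro span_minimal) auto
  qed
  then have "W \<inter> W' \<subset> span ((W \<inter> W') \<union> (W \<inter> orth U))"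
    using W_not_sub by blast
  then obtain x I where xI: "x \<in> W \<inter> orth U" "subspace I" "W \<inter> W' \<subseteq> I" "x \<notin> I"
    "span (insert x I) = span ((W \<inter> W') \<union> (W \<inter> orth U))"
    by (rule exists_hyperplane_through[OF subspace_inter[OF sW sW']])
  have "W \<inter> W' \<union> (W \<inter> orth U) \<subseteq> orth {y}"
  proof
    fix t assume "t \<in> W \<inter> W' \<union> (W \<inter> orth U)"
    then have "\<omega> t y = 0"
      using orthD(2)[OF y] False omega_eq_0_commute by blast
    then show "t \<in> orth {y}"
      by (simp add: perp_def)
  qed
  then have "span (insert x I) \<subseteq> orth {y}"
    using xI(5) span_minimal[OF _ subspace_orth] by metis
  then have "y \<in> orth I"
    using span_superset[of "insert x I"] unfolding mem_orth_iff by (auto simp: perp_def)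
  then show ?thesis
    using that[of I x] xI W_eq by simp
qed

lemma witt_step:
  assumes sU: "subspace U" and iU: "isotropic_set U" and JU: "sum_space J (orth U) = UNIV"
    and RJ: "rad \<subseteq> J"
    and sW: "subspace W" and iW: "isotropic_set W" and sW': "subspace W'" and iW': "isotropic_set W'"
    and JWW': "J \<subseteq> W \<inter> W'" and dim_eq: "dim W = dim W'" and ne: "W \<noteq> W'"
  obtains g where "isometry g" "\<forall>u\<in>U. g u = u" "W \<inter> W' \<subset> g ` W \<inter> W'"
proof -
  have "\<not> W \<subseteq> W'" "\<not> W' \<subseteq> W"
    using subspace_dim_equal[OF sW sW'] subspace_dim_equal[OF sW' sW] dim_eq ne by auto
  then obtain w' where w': "w' \<in> W'" "w' \<notin> W"
    by blast
  obtain j y where jy: "w' = j + y" "j \<in> J" "y \<in> W' \<inter> orth U"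
    using sum_space_UNIV_subspaceE[OF JU sW'] w'(1) JWW' by blast
  then have yW': "y \<in> W'"
    by blast
  have yW: "y \<notin> W"
    using w'(2) jy JWW' sW subspace_add[of W j y] by auto
  have y_orth: "y \<in> orth (W \<inter> W')"
    using iW' yW' by (auto simp: isotropic_def perp_def)
  obtain x I where I: "subspace I" "W = span (insert x I)" "x \<in> W \<inter> orth U" "x \<notin> I"
    "W \<inter> W' \<subseteq> I" "y \<in> orth I"
    using witt_hyperplane[OF JU sW sW' JWW' \<open>\<not> W \<subseteq> W'\<close> y_orth] by blast
  have IW: "I \<subseteq> W"
    using I(2) span_superset by blast
  have iI: "isotropic_set I"
    using iW IW by (auto simp: isotropic_def)
  have x: "isotropic_line x" and y: "isotropic_line y"
    using isotropic_subspace_line iW sW I(3) iW' sW' yW' by blast+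
  have "x \<in> orth (I \<union> U)" "y \<in> orth (I \<union> U)"
    using iW IW I(3,6) jy(3) by (auto simp: isotropic_def perp_def)
  moreover have isotropic_y: "isotropic_set (span (insert y I))"
    by (rule isotropic_span_insert[OF I(1) iI I(6) y])
  have JI: "J \<subseteq> I"
    using JWW' I(5) by blast
  have "x \<notin> orth (orth (I \<union> U))" "y \<notin> orth (orth (I \<union> U))"
    using not_in_orth_orth[OF sU iU JU RJ I(1) JI] iW I(2,4) isotropic_y IW yW by auto
  ultimately obtain g where g: "isometry g" "\<forall>v\<in>I \<union> U. g v = v"
    "g ` span (insert x I) = span (insert y I)"
    using exchange_isotropic_lines[OF x y] by blast
  have "W \<inter> W' \<subseteq> g ` W \<inter> W'" "y \<in> g ` W \<inter> W'"
    using g(3) I(2,5) yW' span_superset[of "insert y I"] by auto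
  then have "W \<inter> W' \<subset> g ` W \<inter> W'"
    using yW by blast
  then show ?thesis
    using that g by blast
qed

lemma witt_extension:
  assumes sU: "subspace U" and iU: "isotropic_set U" and JU: "sum_space J (orth U) = UNIV"
    and RJ: "rad \<subseteq> J"
    and sW: "subspace W" and iW: "isotropic_set W" and JW: "J \<subseteq> W"
    and sW': "subspace W'" and iW': "isotropic_set W'" and JW': "J \<subseteq> W'"
    and dim_eq: "dim W = dim W'"
  obtains g where "isometry g" "\<forall>u\<in>U. g u = u" "g ` W = W'"
  using sW iW JW dim_eq
proof (induction "dim W' - dim (W \<inter> W')" arbitrary: W thesis rule: less_induct)
  case (less W)
  show ?case
  proof (cases "W = W'")
    case True
    then show ?thesis
      using less.prems(1) isometry_id by fastforce
  next
    case False
    obtain g where g: "isometry g" "\<forall>u\<in>U. g u = u" "W \<inter> W' \<subset> g ` W \<inter> W'"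
      using witt_step[OF sU iU JU RJ less.prems(2,3) sW' iW'] less.prems(4,5) JW' False by blast
    have gW: "subspace (g ` W)" "isotropic_set (g ` W)" "dim (g ` W) = dim W'"
      using isometry_image[OF g(1) less.prems(2,3)] less.prems(5) by simp_all
    have "span (W \<inter> W') = W \<inter> W'" "span (g ` W \<inter> W') = g ` W \<inter> W'"
      using subspace_inter[OF less.prems(2) sW'] subspace_inter[OF gW(1) sW'] by simp_all
    then have "dim (W \<inter> W') < dim (g ` W \<inter> W')"
      using dim_psubset[of "W \<inter> W'" "g ` W \<inter> W'"] g(3) by (simp only:)
    moreover have "dim (g ` W \<inter> W') \<le> dim W'"
      by (rule dim_subset) blast
    ultimately have "dim W' - dim (g ` W \<inter> W') < dim W' - dim (W \<inter> W')"
      by linarith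
    moreover have "J \<subseteq> g ` W"
      using g(3) less.prems(4) JW' by blast
    ultimately obtain h where h: "isometry h" "\<forall>u\<in>U. h u = u" "h ` g ` W = W'"
      using less.hyps gW by metis
    show ?thesis
      using less.prems(1)[of "h \<circ> g"] isometry_comp[OF g(1) h(1)] g(2) h(2,3)
      by (simp add: image_comp)
  qed
qed

lemma transitive_on_dims_isom_grp: "transitive_on_dims s (isom_grp s \<sigma> \<epsilon> \<Lambda> q) (Pom s \<sigma> \<epsilon> \<Lambda> q)"
  unfolding transitive_on_dims_def
proof (intro ballI impI)
  fix W W' assume W: "W \<in> Pom s \<sigma> \<epsilon> \<Lambda> q" and W': "W' \<in> Pom s \<sigma> \<epsilon> \<Lambda> q" and "dim W = dim W'"
  have sW: "subspace W" "isotropic_set W" "rad \<subseteq> W"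
    and sW': "subspace W'" "isotropic_set W'" "rad \<subseteq> W'"
    using W W' by (auto simp: Pom_def)
  have "span rad \<subseteq> W" "span rad \<subseteq> W'"
    using span_minimal sW(1,3) sW'(1,3) by blast+
  moreover have "sum_space (span rad) (orth {0}) = UNIV"
    by (force simp: sum_space_def perp_def intro: span_zero)
  moreover have "isotropic_set {0}"
    by (simp add: isotropic_def)
  ultimately obtain g where "isometry g" "g ` W = W'"
    using witt_extension[OF subspace_single_0 _ _ span_superset sW(1,2) _ sW'(1,2) _ \<open>dim W = dim W'\<close>]
    by blast
  then show "\<exists>g\<in>isom_grp s \<sigma> \<epsilon> \<Lambda> q. g ` W = W'"
    using isometry_in_isom_grp by blast
qed

lemma exists_dual_vector:
  assumes sU: "subspace U" and iU: "isotropic_set U" and B: "independent B" "B \<subseteq> U"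
    and b: "b \<in> B" and rad_sub: "rad \<subseteq> span (B - {b})" and XU: "sum_space X (orth U) = UNIV"
  obtains w where "w \<in> X" "\<forall>b'\<in>B. \<omega> b' w = (if b' = b then 1 else 0)"
proof -
  have "b \<notin> orth (orth (B - {b}))"
  proof
    assume "b \<in> orth (orth (B - {b}))"
    then obtain t where t: "t \<in> span (B - {b})" "b - t \<in> orth UNIV"
      using orth_orth by blast
    have "t \<in> U"
      using t(1) B(2) sU span_minimal[of "B - {b}" U] by blast
    then have "b - t \<in> U"
      using sU b B(2) subspace_diff by blast
    then have "Q (b - t) \<in> \<Lambda>"
      using iU by (simp add: isotropic_def)
    then have "b - t \<in> span (B - {b})"
      using t(2) rad_sub mem_radical_iff by blast
    then have "b \<in> span (B - {b})"
      using t(1) span_add by fastforce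
    then show False
      using B(1) b dependent_def by blast
  qed
  then obtain u where u: "u \<in> orth (B - {b})" "\<omega> b u \<noteq> 0"
    by (auto simp: perp_def[of _ _ _ "orth (B - {b})"])
  obtain w p where wp: "s (inverse (\<omega> b u)) u = w + p" "w \<in> X" "p \<in> orth U"
    using sum_space_UNIVE[OF XU] .
  have "\<omega> b' w = \<omega> b' (s (inverse (\<omega> b u)) u)" if "b' \<in> B" for b'
  proof -
    have "\<omega> b' p = 0"
      using that B(2) orthD(2)[OF wp(3)] by blast
    then show ?thesis
      using wp(1) by (simp add: omega_add_right)
  qed
  then have "\<forall>b'\<in>B. \<omega> b' w = (if b' = b then 1 else 0)"
    using u orthD(2)[OF u(1)] by (auto simp: omega_scale_right)
  then show ?thesis
    using that wp(2) by blast
qed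

lemma exists_dual_family:
  assumes sU: "subspace U" and iU: "isotropic_set U"
    and B: "independent (B0 \<union> B1)" "B0 \<inter> B1 = {}" "B0 \<union> B1 \<subseteq> U" "rad \<subseteq> span B0"
    and XU: "sum_space X (orth U) = UNIV"
  obtains w where "\<And>b. b \<in> B1 \<Longrightarrow> w b \<in> X \<and> (\<forall>b'\<in>B0 \<union> B1. \<omega> b' (w b) = (if b' = b then 1 else 0))"
proof -
  have "\<exists>x\<in>X. \<forall>b'\<in>B0 \<union> B1. \<omega> b' x = (if b' = b then 1 else 0)" if b: "b \<in> B1" for b
  proof -
    have "rad \<subseteq> span (B0 \<union> B1 - {b})"
      using B(2,4) b span_mono[of B0 "B0 \<union> B1 - {b}"] by blast
    then show ?thesis
      using exists_dual_vector[OF sU iU B(1,3) _ _ XU, of b] b by blast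
  qed
  then show ?thesis
    using that by (metis bchoice)
qed

lemma isometry_matching_duals:
  assumes sU: "subspace U" and iU: "isotropic_set U" and BU: "B \<subseteq> U" "U \<subseteq> span B"
    and sW: "subspace W" "isotropic_set W" and sW': "subspace W'" "isotropic_set W'"
    and F: "finite F" "F \<subseteq> B"
    and w: "\<And>b. b \<in> F \<Longrightarrow> w b \<in> W \<and> (\<forall>b'\<in>B. \<omega> b' (w b) = (if b' = b then 1 else 0))"
    and w': "\<And>b. b \<in> F \<Longrightarrow> w' b \<in> W' \<and> (\<forall>b'\<in>B. \<omega> b' (w' b) = (if b' = b then 1 else 0))"
  obtains g where "isometry g" "\<forall>u\<in>U. g u = u" "\<forall>b\<in>F. g (w b) = w' b"
proof -
  have "\<exists>g. isometry g \<and> (\<forall>u\<in>U. g u = u) \<and> (\<forall>b\<in>F. g (w b) = w' b)"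
    using F w w'
  proof (induction F rule: finite_induct)
    case empty
    show ?case
      using isometry_id by auto
  next
    case (insert b F)
    have "\<exists>g. isometry g \<and> (\<forall>u\<in>U. g u = u) \<and> (\<forall>b\<in>F. g (w b) = w' b)"
      by (rule insert.IH) (use insert.prems in auto)
    then obtain g where g: "isometry g" "\<forall>u\<in>U. g u = u" "\<forall>b\<in>F. g (w b) = w' b"
      by blast
    have b: "b \<in> B" "b \<in> U" and wb: "w b \<in> W" and w'b: "w' b \<in> W'"
      using insert.prems BU by auto
    have omega_w: "\<omega> b' (w b'') = (if b' = b'' then 1 else 0)"
      and omega_w': "\<omega> b' (w' b'') = (if b' = b'' then 1 else 0)"
      if "b' \<in> B" "b'' \<in> insert b F" for b' b''
      using insert.prems(2,3) that by auto
    have g_omega: "\<omega> u (g v) = \<omega> u v" if "u \<in> U" for u v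
      using isometry_omega[OF g(1), of u v] g(2) that by simp
    have "isotropic_line b" "isotropic_line (g (w b))" "isotropic_line (w' b)"
      using isotropic_subspace_line[OF iU sU b(2)] isotropic_subspace_line[OF sW'(2,1) w'b]
        isometry_isotropic_line[OF g(1) isotropic_subspace_line[OF sW(2,1) wb]] by simp_all
    moreover have "\<omega> b (g (w b)) = 1" "\<omega> b (w' b) = 1"
      using g_omega[OF b(2)] omega_w[OF b(1)] omega_w'[OF b(1)] by simp_all
    ultimately obtain h where h: "isometry h" "h b = b" "h (g (w b)) = w' b"
      and h_fixed: "\<And>v. v \<in> orth {b, g (w b), w' b} \<Longrightarrow> h v = v"
      by (rule eichler_transformation) blast
    have "h b' = b'" if "b' \<in> B" for b'
    proof (cases "b' = b")
      case False
      have "\<omega> b' b = 0"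
        using iU b(2) BU(1) that by (auto simp: isotropic_def)
      moreover have "\<omega> b' (g (w b)) = 0" "\<omega> b' (w' b) = 0"
        using g_omega[of b'] omega_w[OF that, of b] omega_w'[OF that, of b] False BU(1) that by auto
      ultimately show ?thesis
        using h_fixed by (simp add: perp_def)
    qed (use h(2) in simp)
    then have "\<forall>u\<in>U. h u = u"
      using linear_fixes_span[OF isometry_linear[OF h(1)]] BU(2) by blast
    moreover have "h (w' b'') = w' b''" if "b'' \<in> F" for b''
    proof -
      have "b'' \<noteq> b" "b'' \<in> B" "w b'' \<in> W" "w' b'' \<in> W'"
        using that insert.hyps(2) insert.prems by auto
      then have "\<omega> b (w' b'') = 0" "\<omega> (w b'') (w b) = 0" "\<omega> (w' b'') (w' b) = 0"
        using omega_w'[OF b(1), of b''] sW(2) sW'(2) wb w'b that by (auto simp: isotropic_def)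
      moreover have "\<omega> (w' b'') (g (w b)) = \<omega> (w b'') (w b)"
        using g(3) that isometry_omega[OF g(1)] by metis
      ultimately show ?thesis
        using h_fixed omega_eq_0_commute by (simp add: perp_def)
    qed
    ultimately have "isometry (h \<circ> g) \<and> (\<forall>u\<in>U. (h \<circ> g) u = u) \<and> (\<forall>b'\<in>insert b F. (h \<circ> g) (w b') = w' b')"
      using isometry_comp[OF g(1) h(1)] g(2,3) h(3) by auto
    then show ?case
      by blast
  qed
  then show ?thesis
    using that by blast
qed

text \<open>The vector \<open>e - (\<Sum>b\<in>B1. \<omega> b e \<cdot> w b)\<close> is orthogonal to \<open>U\<close>.\<close>

lemma sum_space_orth_duals:
  assumes sJ: "subspace J" and fin: "finite B1" and wJ: "w ` B1 \<subseteq> J"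
    and U_span: "U \<subseteq> span (B0 \<union> B1)" and B0: "B0 \<subseteq> orth UNIV"
    and dual: "\<And>b b'. b \<in> B1 \<Longrightarrow> b' \<in> B1 \<Longrightarrow> \<omega> b' (w b) = (if b' = b then 1 else 0)"
  shows "sum_space J (orth U) = UNIV"
proof -
  have "e \<in> sum_space J (orth U)" for e
  proof -
    define j where "j = (\<Sum>b\<in>B1. s (\<omega> b e) (w b))"
    have "j \<in> J"
      unfolding j_def using wJ by (intro subspace_sum[OF sJ] subspace_scale[OF sJ]) auto
    moreover have "\<omega> b' (e - j) = 0" if "b' \<in> B0 \<union> B1" for b'
    proof (cases "b' \<in> B1")
      case True
      have "\<omega> b' j = (\<Sum>b\<in>B1. if b' = b then \<omega> b e else 0)"
        unfolding j_def omega_sum_right using dual True by (intro sum.cong) (simp_all add: omega_scale_right)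
      also have "\<dots> = \<omega> b' e"
        using fin True by (simp add: sum.delta)
      finally show ?thesis
        by (simp add: omega_diff_right)
    next
      case False
      then show ?thesis
        using that B0 by (auto simp: perp_def omega_eq_0_commute)
    qed
    then have "e - j \<in> orth (B0 \<union> B1)"
      by (simp add: mem_orth_iff)
    then have "e - j \<in> orth U"
      using orth_antimono[OF U_span] orth_span[of "B0 \<union> B1"] by blast
    ultimately show ?thesis
      by (force simp: sum_space_def)
  qed
  then show ?thesis
    by blast
qed

lemma basis_modulo_radical:
  assumes sU: "subspace U" and rU: "rad \<subseteq> U"
  obtains B0 B1 where "independent (B0 \<union> B1)" "B0 \<inter> B1 = {}" "B0 \<union> B1 \<subseteq> U"
    "U \<subseteq> span (B0 \<union> B1)" "rad \<subseteq> span B0" "B0 \<subseteq> orth UNIV"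
proof -
  obtain B0 where B0: "B0 \<subseteq> span rad" "independent B0" "span rad \<subseteq> span B0" "card B0 = dim (span rad)"
    by (rule basis_exists)
  have "B0 \<subseteq> U"
    using B0(1) rU sU span_minimal by blast
  then obtain B where B: "B0 \<subseteq> B" "B \<subseteq> U" "independent B" "U \<subseteq> span B"
    using B0(2) by (rule maximal_independent_subset_extend)
  have "B0 \<union> (B - B0) = B"
    using B(1) by blast
  moreover have "rad \<subseteq> span B0"
    using B0(3) span_superset by blast
  moreover have "B0 \<subseteq> orth UNIV"
    using B0(1) span_rad_subset_orth_UNIV by blast
  ultimately show ?thesis
    using that[of B0 "B - B0"] B(2-4) by simp
qed

lemma transitive_on_dims_fix_grp:
  assumes U: "U \<in> Pom s \<sigma> \<epsilon> \<Lambda> q"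
  shows "transitive_on_dims s (fix_grp s \<sigma> \<epsilon> \<Lambda> q U) (Pom_rel s \<sigma> \<epsilon> \<Lambda> q U)"
  unfolding transitive_on_dims_def
proof (intro ballI impI)
  fix W W' assume W: "W \<in> Pom_rel s \<sigma> \<epsilon> \<Lambda> q U" and W': "W' \<in> Pom_rel s \<sigma> \<epsilon> \<Lambda> q U"
    and dim_eq: "dim W = dim W'"
  have sU: "subspace U" "isotropic_set U" "rad \<subseteq> U"
    using U by (auto simp: Pom_def)
  have sW: "subspace W" "isotropic_set W" "rad \<subseteq> W" "sum_space W (orth U) = UNIV"
    and sW': "subspace W'" "isotropic_set W'" "rad \<subseteq> W'" "sum_space W' (orth U) = UNIV"
    using W W' by (auto simp: Pom_rel_def Pom_def)
  obtain B0 B1 where B: "independent (B0 \<union> B1)" "B0 \<inter> B1 = {}" "B0 \<union> B1 \<subseteq> U"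
    "U \<subseteq> span (B0 \<union> B1)" "rad \<subseteq> span B0" "B0 \<subseteq> orth UNIV"
    using basis_modulo_radical[OF sU(1,3)] by blast
  have fin: "finite B1"
    using finiteI_independent[OF B(1)] by simp
  obtain w where w: "\<And>b. b \<in> B1 \<Longrightarrow> w b \<in> W \<and> (\<forall>b'\<in>B0 \<union> B1. \<omega> b' (w b) = (if b' = b then 1 else 0))"
    using exists_dual_family[OF sU(1,2) B(1-3,5) sW(4)] by blast
  obtain w' where w': "\<And>b. b \<in> B1 \<Longrightarrow> w' b \<in> W' \<and> (\<forall>b'\<in>B0 \<union> B1. \<omega> b' (w' b) = (if b' = b then 1 else 0))"
    using exists_dual_family[OF sU(1,2) B(1-3,5) sW'(4)] by blast
  obtain g1 where g1: "isometry g1" "\<forall>u\<in>U. g1 u = u" "\<forall>b\<in>B1. g1 (w b) = w' b"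
    using isometry_matching_duals[OF sU(1,2) B(3,4) sW(1,2) sW'(1,2) fin _ w w'] by blast
  define J where "J = span (rad \<union> w' ` B1)"
  have "J \<subseteq> W'"
    unfolding J_def using sW'(1,3) w' by (intro span_minimal) auto
  moreover have "J \<subseteq> g1 ` W"
  proof -
    interpret g1: Vector_Spaces.linear s s g1
      using isometry_linear[OF g1(1)] .
    have "g1 ` (rad \<union> w ` B1) = rad \<union> w' ` B1"
      using g1(2,3) sU(3) by (force simp: image_Un image_comp)
    then have "J = g1 ` span (rad \<union> w ` B1)"
      unfolding J_def using g1.span_image by metis
    moreover have "span (rad \<union> w ` B1) \<subseteq> W"
      using sW(1,3) w by (intro span_minimal) auto
    ultimately show ?thesis
      by blast
  qed
  moreover have "sum_space J (orth U) = UNIV"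
    using w' B(2) by (intro sum_space_orth_duals[OF _ fin _ B(4,6)]) (auto simp: J_def intro: span_base)
  moreover have "rad \<subseteq> J"
    unfolding J_def using span_superset by blast
  moreover have "subspace (g1 ` W)" "isotropic_set (g1 ` W)" "dim (g1 ` W) = dim W'"
    using isometry_image[OF g1(1) sW(1,2)] dim_eq by simp_all
  ultimately obtain g2 where g2: "isometry g2" "\<forall>u\<in>U. g2 u = u" "g2 ` g1 ` W = W'"
    using witt_extension[OF sU(1,2), of J "g1 ` W" W'] sW'(1,2) by blast
  have "g2 \<circ> g1 \<in> fix_grp s \<sigma> \<epsilon> \<Lambda> q U"
    using isometry_in_isom_grp[OF isometry_comp[OF g1(1) g2(1)]] g1(2) g2(2)
    by (simp add: fix_grp_def)
  then show "\<exists>g\<in>fix_grp s \<sigma> \<epsilon> \<Lambda> q U. g ` W = W'"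
    using g2(3) by (metis image_comp)
qed

end

theorem proposition5p4:
  fixes sV :: "'k::field \<Rightarrow> 'v::ab_group_add \<Rightarrow> 'v"
    and V0 :: "'v set"
    and sE :: "'k \<Rightarrow> 'e::ab_group_add \<Rightarrow> 'e"
    and \<sigma> :: "'k \<Rightarrow> 'k" and \<epsilon> :: 'k and \<Lambda> :: "'k set"
    and q :: "'e \<Rightarrow> 'e \<Rightarrow> 'k"
    and U :: "'e set"
  assumes "vector_space sV" and "fin_dim sV" and "module.subspace sV V0"
    and "vector_space sE" and "fin_dim sE"
    and "form_param \<sigma> \<epsilon> \<Lambda>" and "sesquilinear sE \<sigma> q"
    and "U \<in> Pom sE \<sigma> \<epsilon> \<Lambda> q"
  shows "transitive_on_dims sV (GLgrp sV) (PV sV)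
    \<and> transitive_on_dims sV (AT sV V0) (PVrel sV V0)
    \<and> transitive_on_dims sE (isom_grp sE \<sigma> \<epsilon> \<Lambda> q) (Pom sE \<sigma> \<epsilon> \<Lambda> q)
    \<and> transitive_on_dims sE (fix_grp sE \<sigma> \<epsilon> \<Lambda> q U) (Pom_rel sE \<sigma> \<epsilon> \<Lambda> q U)"
proof -
  obtain BV where "finite_dimensional_vector_space sV BV"
    using fin_dim_imp_finite_dimensional_vector_space[OF assms(1,2)] .
  then interpret V: finite_dimensional_vector_space sV BV .
  obtain BE where "finite_dimensional_vector_space sE BE"
    using fin_dim_imp_finite_dimensional_vector_space[OF assms(4,5)] .
  then interpret E: finite_dimensional_vector_space sE BE .
  interpret F: finite_formed_space sE \<sigma> \<epsilon> \<Lambda> q BE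
    by unfold_locales (fact assms(6), fact assms(7))
  show ?thesis
    using V.transitive_on_dims_GLgrp V.transitive_on_dims_AT[OF assms(3)]
      F.transitive_on_dims_isom_grp F.transitive_on_dims_fix_grp[OF assms(8)] by blast
qed

end
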